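(* For every integer $n\ge 5$, if $T$ is a standard Young tableau of shape $(n,n)$ chosen uniformly at random, then $$SP\big((n,n),[1,5],[2,2]\big)=\frac{45n^2-135n+30}{2(2n-5)(2n-1)(2n-3)}=\frac{45}{16}\cdot\frac1n+\frac{135}{32}\cdot\frac1{n^2}+\frac{75}{16}\cdot\frac1{n^3}+O\!\left(\frac1{n^4}\right).$$
   Context: A partition (shape) $\lambda=(\lambda_1,\dots,\lambda_k)$ with $\lambda_1\ge\dots\ge\lambda_k>0$ is identified with its Young diagram, the set of cells $[i,j]$ with $1\le i\le k$ and $1\le j\le\lambda_i$ (row $i$, column $j$). A standard Young tableau of shape $\lambda$ with $N=\sum\lambda_i$ cells is a bijective filling $T$ of the cells by $\{1,\dots,N\}$ with $T_{i,j}<T_{i,j+1}$ and $T_{i,j}<T_{i+1,j}$ whenever these cells exist. For cells $c_1,c_2$ of $\lambda$, the sorting probability is $SP(\lambda,c_1,c_2)=\Pr(T_{c_1}>T_{c_2})-\Pr(T_{c_2}>T_{c_1})=2\Pr(T_{c_1}>T_{c_2})-1$, where $T$ is uniformly random among standard Young tableaux of shape $\lambda$. *)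

theory Defs
  imports "HOL-Analysis.Analysis" "HOL-Library.Landau_Symbols"
begin

(* A partition is a list of positive parts, weakly decreasing. Cells are pairs (i,j),
   1-indexed: row i, column j. *)
definition young_diagram :: "nat list \<Rightarrow> (nat \<times> nat) set" where
  "young_diagram lam = {(i, j). 1 \<le> i \<and> i \<le> length lam \<and> 1 \<le> j \<and> j \<le> lam ! (i - 1)}"

definition is_partition :: "nat list \<Rightarrow> bool" where
  "is_partition lam \<longleftrightarrow> sorted_wrt (\<ge>) lam \<and> (\<forall>x \<in> set lam. x > 0)"

(* Standard Young tableaux of shape lam: bijective fillings of the cells by {1..N},
   increasing along rows and down columns; the value outside the diagram is fixed to 0
   so that the set of tableaux is finite. *)
definition SYT :: "nat list \<Rightarrow> ((nat \<times> nat) \<Rightarrow> nat) set" where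
  "SYT lam = {T. bij_betw T (young_diagram lam) {1..sum_list lam}
      \<and> (\<forall>c. c \<notin> young_diagram lam \<longrightarrow> T c = 0)
      \<and> (\<forall>i j. (i, j) \<in> young_diagram lam \<and> (i, j + 1) \<in> young_diagram lam
                 \<longrightarrow> T (i, j) < T (i, j + 1))
      \<and> (\<forall>i j. (i, j) \<in> young_diagram lam \<and> (i + 1, j) \<in> young_diagram lam
                 \<longrightarrow> T (i, j) < T (i + 1, j))}"

definition sorting_prob :: "nat list \<Rightarrow> nat \<times> nat \<Rightarrow> nat \<times> nat \<Rightarrow> real" where
  "sorting_prob lam c1 c2 =
     (real (card {T \<in> SYT lam. T c1 > T c2}) - real (card {T \<in> SYT lam. T c2 > T c1}))
       / real (card (SYT lam))"

end

theory Submission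
  imports Defs "HOL-Real_Asymp.Real_Asymp"
begin

text \<open>Removing the largest entry of a two-row tableau leaves a two-row tableau with one cell
  less, at the end of the first or of the second row. This gives Pascal-type recurrences for the
  number of tableaux of shape \<open>(a, b)\<close> and for the number of those with
  \<open>T (2, 2) < T (1, 5)\<close>, which are solved by reflection-principle differences of binomial
  coefficients. For \<open>a = b = n\<close> both counts are rational functions of \<open>n\<close> times one common
  factorial ratio, so \<open>SP = (2 \<cdot> count - total) / total\<close> is a rational function of \<open>n\<close>, whose
  expansion at infinity gives the error term.\<close>

lemma SYT_bij_betw: "T \<in> SYT lam \<Longrightarrow> bij_betw T (young_diagram lam) {1..sum_list lam}"
  unfolding SYT_def by simp

lemma SYT_range:
  "T \<in> SYT lam \<Longrightarrow> c \<in> young_diagram lam \<Longrightarrow> T c \<in> {1..sum_list lam}"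
  by (rule bij_betw_apply[OF SYT_bij_betw])

lemma SYT_outside: "T \<in> SYT lam \<Longrightarrow> c \<notin> young_diagram lam \<Longrightarrow> T c = 0"
  unfolding SYT_def by blast

lemma SYT_row_less:
  "T \<in> SYT lam \<Longrightarrow> (i, j) \<in> young_diagram lam \<Longrightarrow> (i, j + 1) \<in> young_diagram lam
    \<Longrightarrow> T (i, j) < T (i, j + 1)"
  unfolding SYT_def by blast

lemma SYT_col_less:
  "T \<in> SYT lam \<Longrightarrow> (i, j) \<in> young_diagram lam \<Longrightarrow> (i + 1, j) \<in> young_diagram lam
    \<Longrightarrow> T (i, j) < T (i + 1, j)"
  unfolding SYT_def by blast

lemma SYT_add_corner:
  assumes T: "T \<in> SYT lam'"
    and D: "young_diagram lam = insert c (young_diagram lam')" "c \<notin> young_diagram lam'"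
    and N: "sum_list lam = Suc (sum_list lam')"
    and right: "\<And>i j. c = (i, j) \<Longrightarrow> (i, j + 1) \<notin> young_diagram lam"
    and below: "\<And>i j. c = (i, j) \<Longrightarrow> (i + 1, j) \<notin> young_diagram lam"
  shows "T(c := sum_list lam) \<in> SYT lam"
proof -
  let ?T = "T(c := sum_list lam)"
  have "bij_betw ?T (young_diagram lam') {1..sum_list lam'}"
    using SYT_bij_betw[OF T] D(2) by (subst bij_betw_cong[where g = T]) auto
  then have "bij_betw ?T (young_diagram lam' \<union> {c}) ({1..sum_list lam'} \<union> {sum_list lam})"
    by (rule bij_betw_combine) (use N in auto)
  moreover have "{1..sum_list lam'} \<union> {sum_list lam} = {1..sum_list lam}"
    using N by auto
  ultimately have "bij_betw ?T (young_diagram lam) {1..sum_list lam}"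
    using D(1) by simp
  moreover have "\<forall>d. d \<notin> young_diagram lam \<longrightarrow> ?T d = 0"
    using SYT_outside[OF T] D(1) by auto
  moreover have "?T x < ?T y"
    if "x \<in> young_diagram lam" "y \<in> young_diagram lam"
      and "y = (fst x, snd x + 1) \<or> y = (fst x + 1, snd x)" for x y
  proof -
    have "x \<noteq> c" using that right below by (cases x) auto
    then have x: "x \<in> young_diagram lam'" using that(1) D(1) by auto
    show ?thesis
    proof (cases "y = c")
      case True
      then show ?thesis using SYT_range[OF T x] N \<open>x \<noteq> c\<close> by auto
    next
      case False
      then have "y \<in> young_diagram lam'" using that(2) D(1) by auto
      then show ?thesis
        using that(3) SYT_row_less[OF T] SYT_col_less[OF T] x False \<open>x \<noteq> c\<close> by (cases x) auto
    qed
  qed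
  ultimately show ?thesis
    unfolding SYT_def by fastforce
qed

lemma SYT_remove_max:
  assumes T: "T \<in> SYT lam"
    and D: "young_diagram lam = insert c (young_diagram lam')" "c \<notin> young_diagram lam'"
    and N: "sum_list lam = Suc (sum_list lam')" and Tc: "T c = sum_list lam"
  shows "T(c := 0) \<in> SYT lam'"
proof -
  have "bij_betw T (young_diagram lam - {c}) ({1..sum_list lam} - {sum_list lam})"
    by (rule bij_betw_DiffI[OF SYT_bij_betw[OF T]]) (use Tc D N in auto)
  moreover have "young_diagram lam - {c} = young_diagram lam'"
    using D by auto
  moreover have "{1..sum_list lam} - {sum_list lam} = {1..sum_list lam'}"
    using N by auto
  ultimately have "bij_betw (T(c := 0)) (young_diagram lam') {1..sum_list lam'}"
    using D(2) by (subst bij_betw_cong[where g = T]) auto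
  with SYT_outside[OF T] SYT_row_less[OF T] SYT_col_less[OF T] D show ?thesis
    unfolding SYT_def by auto
qed

lemma finite_young_diagram: "finite (young_diagram lam)"
proof -
  have "j \<le> sum_list lam" if "(i, j) \<in> young_diagram lam" for i j
    using that elem_le_sum_list[of "i - 1" lam] by (force simp: young_diagram_def)
  then have "young_diagram lam \<subseteq> {1..length lam} \<times> {1..sum_list lam}"
    by (auto simp: young_diagram_def)
  then show ?thesis
    by (rule finite_subset) simp
qed

lemma finite_SYT: "finite (SYT lam)"
proof (rule finite_subset)
  show "SYT lam \<subseteq> {T. \<forall>c. (c \<in> young_diagram lam \<longrightarrow> T c \<in> {1..sum_list lam})
                             \<and> (c \<notin> young_diagram lam \<longrightarrow> T c = 0)}"
    using SYT_range SYT_outside by blast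
  show "finite \<dots>"
    by (rule finite_set_of_finite_funs) (simp_all add: finite_young_diagram)
qed

subsection \<open>Two-row tableaux\<close>

lemma two_row_diagram_iff:
  "(i, j) \<in> young_diagram [a, b] \<longleftrightarrow>
     i = 1 \<and> 1 \<le> j \<and> j \<le> a \<or> i = 2 \<and> 1 \<le> j \<and> j \<le> b"
  unfolding young_diagram_def by (auto simp: le_Suc_eq numeral_2_eq_2)

lemma two_row_diagram_Suc_first:
  "young_diagram [Suc a, b] = insert (1, Suc a) (young_diagram [a, b])"
  by (auto simp: two_row_diagram_iff)

lemma two_row_diagram_Suc_second:
  "young_diagram [a, Suc b] = insert (2, Suc b) (young_diagram [a, b])"
  by (auto simp: two_row_diagram_iff)

lemma SYT_two_rows_max_cell:
  assumes T: "T \<in> SYT [a, b]" and "b \<le> a"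
    and c: "c \<in> young_diagram [a, b]" "T c = a + b"
  shows "c = (1, a) \<and> b < a \<or> c = (2, b) \<and> 1 \<le> b"
proof -
  obtain i j where ij: "c = (i, j)" by fastforce
  have "(i, j + 1) \<notin> young_diagram [a, b]"
    using SYT_row_less[OF T] SYT_range[OF T] c ij by fastforce
  moreover have "(i + 1, j) \<notin> young_diagram [a, b]"
    using SYT_col_less[OF T] SYT_range[OF T] c ij by fastforce
  ultimately show ?thesis
    using c(1) ij \<open>b \<le> a\<close> by (auto simp: two_row_diagram_iff)
qed

lemma SYT_two_rows_decompose:
  assumes "b \<le> a" "1 \<le> a + b"
  shows "SYT [a, b] = (if b < a then (\<lambda>T. T((1, a) := a + b)) ` SYT [a - 1, b] else {})
                    \<union> (if 1 \<le> b then (\<lambda>T. T((2, b) := a + b)) ` SYT [a, b - 1] else {})"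
    (is "_ = ?first \<union> ?second")
proof (intro equalityI subsetI)
  fix T assume T: "T \<in> SYT [a, b]"
  have "a + b \<in> T ` young_diagram [a, b]"
    using bij_betw_imp_surj_on[OF SYT_bij_betw[OF T]] assms(2) by simp
  then obtain c where c: "c \<in> young_diagram [a, b]" "T c = a + b"
    by (metis imageE)
  have T_eq: "T = (T(c := 0))(c := a + b)"
    using c by auto
  from SYT_two_rows_max_cell[OF T assms(1) c] show "T \<in> ?first \<union> ?second"
  proof (elim disjE conjE)
    assume "c = (1, a)" "b < a"
    then obtain a' where a': "a = Suc a'" "c = (1, Suc a')"
      by (cases a) auto
    have "T(c := 0) \<in> SYT [a', b]"
      by (rule SYT_remove_max[OF T])
        (use c a' in \<open>simp_all add: two_row_diagram_Suc_first two_row_diagram_iff\<close>)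
    then have "T \<in> (\<lambda>T'. T'(c := a + b)) ` SYT [a', b]"
      using T_eq by blast
    then show ?thesis
      using a' \<open>b < a\<close> by simp
  next
    assume "c = (2, b)" "1 \<le> b"
    then obtain b' where b': "b = Suc b'" "c = (2, Suc b')"
      by (cases b) auto
    have "T(c := 0) \<in> SYT [a, b']"
      by (rule SYT_remove_max[OF T])
        (use c b' in \<open>simp_all add: two_row_diagram_Suc_second two_row_diagram_iff\<close>)
    then have "T \<in> (\<lambda>T'. T'(c := a + b)) ` SYT [a, b']"
      using T_eq by blast
    then show ?thesis
      using b' by simp
  qed
next
  fix T assume "T \<in> ?first \<union> ?second"
  then show "T \<in> SYT [a, b]"
  proof (elim UnE)
    assume "T \<in> ?first"
    then obtain a' T' where "a = Suc a'" "b \<le> a'" "T' \<in> SYT [a', b]" "T = T'((1, a) := a + b)"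
      by (cases a) (auto split: if_splits)
    then show ?thesis
      using SYT_add_corner[of T' "[a', b]" "[a, b]" "(1, a)"]
      by (simp add: two_row_diagram_Suc_first two_row_diagram_iff)
  next
    assume "T \<in> ?second"
    then obtain b' T' where "b = Suc b'" "T' \<in> SYT [a, b']" "T = T'((2, b) := a + b)"
      by (cases b) (auto split: if_splits)
    then show ?thesis
      using SYT_add_corner[of T' "[a, b']" "[a, b]" "(2, b)"] assms(1)
      by (simp add: two_row_diagram_Suc_second two_row_diagram_iff)
  qed
qed

lemma inj_on_fun_upd_vanishing: "inj_on (\<lambda>f. f(x := y)) {f. f x = z}"
proof (rule inj_onI)
  fix f g assume "f \<in> {f. f x = z}" "g \<in> {f. f x = z}" "f(x := y) = g(x := y)"
  then have "f(x := y, x := z) = g(x := y, x := z)"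
    by simp
  with \<open>f \<in> _\<close> \<open>g \<in> _\<close> show "f = g"
    by (simp add: fun_upd_idem)
qed

lemma card_SYT_two_rows_filter:
  assumes "b \<le> a" "1 \<le> a + b"
  shows "card {T \<in> SYT [a, b]. Q T} =
           (if b < a then card {T \<in> SYT [a - 1, b]. Q (T((1, a) := a + b))} else 0)
         + (if 1 \<le> b then card {T \<in> SYT [a, b - 1]. Q (T((2, b) := a + b))} else 0)"
proof -
  define first where "first = (if b < a then (\<lambda>T. T((1, a) := a + b))
                                  ` {T \<in> SYT [a - 1, b]. Q (T((1, a) := a + b))} else {})"
  define second where "second = (if 1 \<le> b then (\<lambda>T. T((2, b) := a + b))
                                   ` {T \<in> SYT [a, b - 1]. Q (T((2, b) := a + b))} else {})"
  have "{T \<in> SYT [a, b]. Q T} = first \<union> second"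
    unfolding first_def second_def by (subst SYT_two_rows_decompose[OF assms]) auto
  moreover have "first \<inter> second = {}"
  proof -
    have "T (1, a) = a + b" if "T \<in> first" for T
      using that unfolding first_def by (auto split: if_splits)
    moreover have "T (1, a) \<noteq> a + b" if "T \<in> second" for T
    proof -
      obtain T' where T': "1 \<le> b" "T' \<in> SYT [a, b - 1]" "T = T'((2, b) := a + b)"
        using \<open>T \<in> second\<close> unfolding second_def by (auto split: if_splits)
      then have "(1, a) \<in> young_diagram [a, b - 1]"
        using assms(1) by (simp add: two_row_diagram_iff)
      from SYT_range[OF T'(2) this] show ?thesis
        using T' by auto
    qed
    ultimately show ?thesis
      by blast
  qed
  moreover have "card first = (if b < a then card {T \<in> SYT [a - 1, b]. Q (T((1, a) := a + b))} else 0)"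
  proof -
    have "{T \<in> SYT [a - 1, b]. Q (T((1, a) := a + b))} \<subseteq> {T. T (1, a) = 0}"
    proof -
      have "(1, a) \<notin> young_diagram [a - 1, b]"
        by (auto simp: two_row_diagram_iff)
      then show ?thesis
        using SYT_outside by blast
    qed
    then show ?thesis
      unfolding first_def by (simp add: card_image inj_on_subset[OF inj_on_fun_upd_vanishing])
  qed
  moreover have "card second = (if 1 \<le> b then card {T \<in> SYT [a, b - 1]. Q (T((2, b) := a + b))} else 0)"
  proof -
    have "{T \<in> SYT [a, b - 1]. Q (T((2, b) := a + b))} \<subseteq> {T. T (2, b) = 0}"
    proof -
      have "(2, b) \<notin> young_diagram [a, b - 1]"
        by (auto simp: two_row_diagram_iff)
      then show ?thesis
        using SYT_outside by blast
    qed
    then show ?thesis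
      unfolding second_def by (simp add: card_image inj_on_subset[OF inj_on_fun_upd_vanishing])
  qed
  moreover have "finite first" "finite second"
    unfolding first_def second_def by (simp_all add: finite_SYT)
  ultimately show ?thesis
    by (simp add: card_Un_disjoint)
qed

subsection \<open>Skew ballot numbers\<close>

text \<open>By the reflection principle, for \<open>l \<le> k\<close> this counts the standard fillings of the skew
  shape \<open>(a, b) / (k, l)\<close>, i.e. lattice paths from \<open>(k, l)\<close> to \<open>(a, b)\<close> inside
  \<open>{(i, j). j \<le> i}\<close>; \<open>skew_ballot 0 0\<close> is the ballot number.\<close>

definition skew_ballot :: "nat \<Rightarrow> nat \<Rightarrow> nat \<Rightarrow> nat \<Rightarrow> real" where
  "skew_ballot k l a b =
     real ((a + b - k - l) choose (a - k)) - real ((a + b - k - l) choose (a + 1 - l))"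

lemma skew_ballot_first_row_only:
  "l \<le> k \<Longrightarrow> k \<le> a \<Longrightarrow> skew_ballot k l a l = 1"
  by (simp add: skew_ballot_def)

lemma skew_ballot_below_start:
  "l \<le> k \<Longrightarrow> k < a \<Longrightarrow> skew_ballot k (Suc l) a l = 0"
  by (simp add: skew_ballot_def binomial_eq_0)

lemma skew_ballot_above_diagonal:
  assumes "k \<le> a" "l \<le> Suc a"
  shows "skew_ballot k l a (Suc a) = 0"
proof -
  have "a + Suc a - k - l - (a - k) = a + 1 - l"
    using assms by simp
  then show ?thesis
    unfolding skew_ballot_def using binomial_symmetric[of "a - k" "a + Suc a - k - l"] assms
    by simp
qed

lemma skew_ballot_rec:
  assumes "l \<le> k" "k < a" "l \<le> b" "1 \<le> b"
  shows "skew_ballot k l a b = skew_ballot k l (a - 1) b + skew_ballot k l a (b - 1)"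
proof -
  define N where "N = a + b - k - l - 1"
  have "a + b - k - l = Suc N" "a - 1 + b - k - l = N" "a + (b - 1) - k - l = N"
    using assms unfolding N_def by simp_all
  moreover have "a - k = Suc (a - 1 - k)" "a + 1 - l = Suc (a - l)" "a - 1 + 1 - l = a - l"
    using assms by simp_all
  ultimately show ?thesis
    unfolding skew_ballot_def by (simp only: binomial_Suc_Suc of_nat_add)
qed

text \<open>In a tableau with \<open>T (2, 2) < T (1, 5)\<close>, the entries up to \<open>T (2, 2)\<close> fill a shape
  \<open>(k, 2)\<close> with \<open>k \<in> {2, 3, 4}\<close>, and \<open>k\<close> standard tableaux of that shape have their largest
  entry at \<open>(2, 2)\<close>.\<close>

definition count_22_before_15 :: "nat \<Rightarrow> nat \<Rightarrow> real" where
  "count_22_before_15 a b = (\<Sum>k\<in>{2, 3, 4}. real k * skew_ballot k 2 a b)"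

lemma count_22_before_15_rec:
  "5 \<le> a \<Longrightarrow> 2 \<le> b \<Longrightarrow>
    count_22_before_15 a b = count_22_before_15 (a - 1) b + count_22_before_15 a (b - 1)"
  unfolding count_22_before_15_def by (simp add: skew_ballot_rec algebra_simps)

lemma count_22_before_15_second_row_1: "5 \<le> a \<Longrightarrow> count_22_before_15 a 1 = 0"
  unfolding count_22_before_15_def
  using skew_ballot_below_start[of 1 _ a] by (simp add: numeral_2_eq_2)

lemma count_22_before_15_above_diagonal: "4 \<le> a \<Longrightarrow> count_22_before_15 a (Suc a) = 0"
  unfolding count_22_before_15_def by (simp add: skew_ballot_above_diagonal)

lemma count_22_before_15_first_row_4:
  "2 \<le> b \<Longrightarrow> b \<le> 4 \<Longrightarrow> count_22_before_15 4 b = skew_ballot 0 0 4 b"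
  by (auto simp: le_Suc_eq numeral_eq_Suc count_22_before_15_def skew_ballot_def)

lemma SYT_0_0: "SYT [0, 0] = {\<lambda>_. 0}"
proof -
  have "young_diagram [0, 0] = {}"
    by (auto simp: two_row_diagram_iff)
  then show ?thesis
    unfolding SYT_def by (auto simp: bij_betw_def)
qed

lemma card_SYT_two_rows: "b \<le> a \<Longrightarrow> real (card (SYT [a, b])) = skew_ballot 0 0 a b"
proof (induction "a + b" arbitrary: a b)
  case 0
  then show ?case
    by (simp add: SYT_0_0 skew_ballot_def)
next
  case (Suc n)
  have "real (card (SYT [a, b])) = (if b < a then skew_ballot 0 0 (a - 1) b else 0)
                                  + (if 1 \<le> b then skew_ballot 0 0 a (b - 1) else 0)"
    using card_SYT_two_rows_filter[of b a "\<lambda>_. True"] Suc by simp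
  also have "\<dots> = skew_ballot 0 0 a b"
  proof (cases "b = 0")
    case True
    then show ?thesis
      using Suc.hyps(2) skew_ballot_first_row_only[of 0 0] by simp
  next
    case False
    moreover have "b = a \<Longrightarrow> skew_ballot 0 0 (a - 1) b = 0"
      using False skew_ballot_above_diagonal[of 0 "a - 1" 0] by (cases a) simp_all
    ultimately show ?thesis
      using skew_ballot_rec[of 0 0 a b] Suc.prems by auto
  qed
  finally show ?case .
qed

lemma card_SYT_22_before_15:
  "5 \<le> a \<Longrightarrow> 2 \<le> b \<Longrightarrow> b \<le> a \<Longrightarrow>
    real (card {T \<in> SYT [a, b]. T (2, 2) < T (1, 5)}) = count_22_before_15 a b"
proof (induction "a + b" arbitrary: a b)
  case 0
  then show ?case by simp
next
  case (Suc n)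
  let ?Q = "\<lambda>T :: nat \<times> nat \<Rightarrow> nat. T (2, 2) < T (1, 5)"
  have first: "real (card {T \<in> SYT [a - 1, b]. ?Q (T((1, a) := a + b))})
                 = (if a = 5 then skew_ballot 0 0 4 b else count_22_before_15 (a - 1) b)"
    if "b < a"
  proof (cases "a = 5")
    case True
    have "T (2, 2) < a + b" if "T \<in> SYT [4, b]" for T
      using SYT_range[OF that, of "(2, 2)"] \<open>2 \<le> b\<close> True by (simp add: two_row_diagram_iff)
    then have "{T \<in> SYT [a - 1, b]. ?Q (T((1, a) := a + b))} = SYT [4, b]"
      using True by auto
    then show ?thesis
      using True card_SYT_two_rows[of b 4] \<open>b < a\<close> by simp
  next
    case False
    then have "{T \<in> SYT [a - 1, b]. ?Q (T((1, a) := a + b))} = {T \<in> SYT [a - 1, b]. ?Q T}"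
      by auto
    then show ?thesis
      using Suc that False by simp
  qed
  have second: "real (card {T \<in> SYT [a, b - 1]. ?Q (T((2, b) := a + b))})
                  = (if b = 2 then 0 else count_22_before_15 a (b - 1))"
  proof (cases "b = 2")
    case True
    have "T (1, 5) < a + b" if "T \<in> SYT [a, b - 1]" for T
      using SYT_range[OF that, of "(1, 5)"] Suc.prems by (auto simp: two_row_diagram_iff)
    then have "{T \<in> SYT [a, b - 1]. ?Q (T((2, b) := a + b))} = {}"
      using True by fastforce
    then have "card {T \<in> SYT [a, b - 1]. ?Q (T((2, b) := a + b))} = 0"
      by (simp only: card.empty)
    then show ?thesis
      using True by simp
  next
    case False
    then have "{T \<in> SYT [a, b - 1]. ?Q (T((2, b) := a + b))} = {T \<in> SYT [a, b - 1]. ?Q T}"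
      by auto
    then show ?thesis
      using Suc False by simp
  qed
  have "real (card {T \<in> SYT [a, b]. ?Q T})
          = (if b < a then (if a = 5 then skew_ballot 0 0 4 b else count_22_before_15 (a - 1) b) else 0)
          + (if b = 2 then 0 else count_22_before_15 a (b - 1))"
    using card_SYT_two_rows_filter[of b a ?Q] Suc.prems first second by simp
  also have "\<dots> = count_22_before_15 a b"
  proof -
    have "count_22_before_15 (a - 1) b
            = (if b < a then (if a = 5 then skew_ballot 0 0 4 b else count_22_before_15 (a - 1) b) else 0)"
    proof (cases "b < a")
      case True
      then show ?thesis
        using Suc.prems count_22_before_15_first_row_4[of b] by simp
    next
      case False
      then have "b = Suc (a - 1)"
        using Suc.prems by simp
      then show ?thesis
        using False Suc.prems count_22_before_15_above_diagonal[of "a - 1"] by simp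
    qed
    moreover have "count_22_before_15 a (b - 1) = (if b = 2 then 0 else count_22_before_15 a (b - 1))"
      using Suc.prems count_22_before_15_second_row_1[of a] by simp
    ultimately show ?thesis
      using count_22_before_15_rec[of a b] Suc.prems by simp
  qed
  finally show ?case .
qed

lemma sorting_prob_eq_card:
  assumes "c1 \<in> young_diagram lam" "c2 \<in> young_diagram lam" "c1 \<noteq> c2"
  shows "sorting_prob lam c1 c2 =
    (2 * real (card {T \<in> SYT lam. T c2 < T c1}) - real (card (SYT lam))) / real (card (SYT lam))"
proof -
  have "T c1 < T c2 \<longleftrightarrow> \<not> T c2 < T c1" if "T \<in> SYT lam" for T
  proof -
    have "T c1 \<noteq> T c2"
      using assms SYT_bij_betw[OF that] by (auto simp: bij_betw_def inj_on_def)
    then show ?thesis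
      by linarith
  qed
  then have "{T \<in> SYT lam. T c1 < T c2} = SYT lam - {T \<in> SYT lam. T c2 < T c1}"
    by auto
  then have "card {T \<in> SYT lam. T c1 < T c2} = card (SYT lam) - card {T \<in> SYT lam. T c2 < T c1}"
    by (simp add: card_Diff_subset finite_SYT)
  moreover have "card {T \<in> SYT lam. T c2 < T c1} \<le> card (SYT lam)"
    by (simp add: card_mono finite_SYT)
  ultimately show ?thesis
    unfolding sorting_prob_def by (simp add: of_nat_diff)
qed

subsection \<open>The closed form\<close>

lemma real_binomial_fact: "k + j = N \<Longrightarrow> real (N choose k) = fact N / (fact k * fact j)"
  using binomial_fact[of k N] by auto

lemma divide_regroup:
  fixes a b c d e :: "'a :: field"
  shows "a * b / ((c * d) * (e * d)) = b / (d * d) * (a / (c * e))"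
  by (simp add: divide_inverse ac_simps)

lemma skew_ballot_0_0_square: "skew_ballot 0 0 n n = fact (2 * n) / (fact n * fact (n + 1))"
proof (cases n)
  case 0
  then show ?thesis
    by (simp add: skew_ballot_def)
next
  case (Suc k)
  define F :: real where "F = fact (2 * n)"
  have "n + n = 2 * n" "n + 1 + k = 2 * n"
    using Suc by simp_all
  note binomials = this[THEN real_binomial_fact]
  have "skew_ballot 0 0 n n = real ((2 * n) choose n) - real ((2 * n) choose (n + 1))"
    by (simp add: skew_ballot_def mult_2)
  also have "\<dots> = F / (fact n * fact n) - F / (fact (n + 1) * fact k)"
    unfolding binomials F_def ..
  also have "\<dots> = F / (fact n * fact (n + 1))"
  proof -
    have "fact n = (real k + 1) * fact k" "fact (n + 1) = (real k + 2) * ((real k + 1) * fact k)"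
      using Suc by (simp_all add: algebra_simps)
    then show ?thesis
      by (simp add: diff_frac_eq frac_eq_eq) (simp add: algebra_simps)
  qed
  finally show ?thesis
    unfolding F_def .
qed

lemma count_22_before_15_square:
  fixes m :: nat
  defines "x \<equiv> real m"
  shows "count_22_before_15 (m + 5) (m + 5)
           = 2 * (16 * x + 37) * fact (2 * m + 4) / (fact (m + 2) * fact (m + 4))"
proof -
  define A :: real where "A = fact (2 * m + 4)"
  define B :: real where "B = fact m"
  define q1 where "q1 = x + 1"
  define q2 where "q2 = (x + 2) * q1"
  define q3 where "q3 = (x + 3) * q2"
  define q4 where "q4 = (x + 4) * q3"
  have nonzero: "x + 1 \<noteq> 0" "x + 2 \<noteq> 0" "x + 3 \<noteq> 0" "x + 4 \<noteq> 0" "B \<noteq> 0"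
    unfolding x_def B_def by (simp_all add: add_nonneg_eq_0_iff)
  \<comment> \<open>The factors \<open>1\<close> let \<open>divide_regroup\<close> match every binomial coefficient below.\<close>
  have fact: "fact m = 1 * B" "fact (m + 1) = q1 * B" "fact (m + 2) = q2 * B"
    "fact (m + 3) = q3 * B" "fact (m + 4) = q4 * B" "fact (2 * m + 4) = 1 * A" "fact (2 * m + 5) = (2 * x + 5) * A"
    "fact (2 * m + 6) = ((2 * x + 6) * (2 * x + 5)) * A"
    unfolding A_def B_def x_def q1_def q2_def q3_def q4_def
    by (simp_all add: numeral_eq_Suc algebra_simps)
  have binomials:
    "real ((2 * m + 6) choose (m + 3)) = A / (B * B) * ((2 * x + 6) * (2 * x + 5) / (q3 * q3))"
    "real ((2 * m + 6) choose (m + 4)) = A / (B * B) * ((2 * x + 6) * (2 * x + 5) / (q4 * q2))"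
    "real ((2 * m + 5) choose (m + 2)) = A / (B * B) * ((2 * x + 5) / (q2 * q3))"
    "real ((2 * m + 5) choose (m + 4)) = A / (B * B) * ((2 * x + 5) / (q4 * q1))"
    "real ((2 * m + 4) choose (m + 1)) = A / (B * B) * (1 / (q1 * q3))"
    "real ((2 * m + 4) choose (m + 4)) = A / (B * B) * (1 / (q4 * 1))"
    using real_binomial_fact[of "m + 3" "m + 3" "2 * m + 6"]
      real_binomial_fact[of "m + 4" "m + 2" "2 * m + 6"]
      real_binomial_fact[of "m + 2" "m + 3" "2 * m + 5"]
      real_binomial_fact[of "m + 4" "m + 1" "2 * m + 5"]
      real_binomial_fact[of "m + 1" "m + 3" "2 * m + 4"]
      real_binomial_fact[of "m + 4" m "2 * m + 4"]
    unfolding fact divide_regroup by simp_all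
  have "count_22_before_15 (m + 5) (m + 5)
      = 2 * (real ((2 * m + 6) choose (m + 3)) - real ((2 * m + 6) choose (m + 4)))
      + 3 * (real ((2 * m + 5) choose (m + 2)) - real ((2 * m + 5) choose (m + 4)))
      + 4 * (real ((2 * m + 4) choose (m + 1)) - real ((2 * m + 4) choose (m + 4)))"
    by (simp add: count_22_before_15_def skew_ballot_def add_ac)
  also have "\<dots> = A / (B * B) *
      (2 * ((2 * x + 6) * (2 * x + 5) / (q3 * q3) - (2 * x + 6) * (2 * x + 5) / (q4 * q2))
     + 3 * ((2 * x + 5) / (q2 * q3) - (2 * x + 5) / (q4 * q1)) + 4 * (1 / (q1 * q3) - 1 / (q4 * 1)))"
    unfolding binomials by (simp only: ring_distribs mult.left_commute[of "A / (B * B)"])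
  also have "\<dots> = A / (B * B) * (2 * (16 * x + 37) / (q2 * q4))"
  proof -
    have "(2 * x + 6) * (2 * x + 5) / (q3 * q3) - (2 * x + 6) * (2 * x + 5) / (q4 * q2)
            = (2 * x + 6) * (2 * x + 5) / (q4 * q3)"
      "(2 * x + 5) / (q2 * q3) - (2 * x + 5) / (q4 * q1) = 2 * (2 * x + 5) / (q4 * q2)"
      "1 / (q1 * q3) - 1 / (q4 * 1) = 3 / (q4 * q1)"
      unfolding q1_def q2_def q3_def q4_def
      using nonzero by (simp_all add: diff_frac_eq frac_eq_eq) (simp_all add: algebra_simps)
    moreover have "2 * ((2 * x + 6) * (2 * x + 5) / (q4 * q3)) + 3 * (2 * (2 * x + 5) / (q4 * q2))
        + 4 * (3 / (q4 * q1)) = 2 * (16 * x + 37) / (q2 * q4)"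
      unfolding q1_def q2_def q3_def q4_def
      using nonzero by (simp add: add_frac_eq frac_eq_eq) (simp add: algebra_simps)
    ultimately show ?thesis
      by simp
  qed
  also have "\<dots> = 2 * (16 * x + 37) * fact (2 * m + 4) / (fact (m + 2) * fact (m + 4))"
    unfolding fact(3, 5, 6) by (simp add: divide_inverse ac_simps)
  finally show ?thesis .
qed

lemma sorting_ratio_closed_form:
  fixes m :: nat
  defines "x \<equiv> real m"
  shows "(2 * count_22_before_15 (m + 5) (m + 5) - skew_ballot 0 0 (m + 5) (m + 5))
           / skew_ballot 0 0 (m + 5) (m + 5)
         = (45 * (x + 5) ^ 2 - 135 * (x + 5) + 30)
             / (2 * (2 * (x + 5) - 5) * (2 * (x + 5) - 1) * (2 * (x + 5) - 3))"
proof -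
  define S :: real where "S = fact (2 * m + 4) / (fact (m + 2) * fact (m + 4))"
  define P where
    "P = (2 * x + 10) * (2 * x + 9) * (2 * x + 8) * (2 * x + 7) * (2 * x + 6) * (2 * x + 5)"
  define Q where "Q = ((x + 5) * (x + 4) * (x + 3)) * ((x + 6) * (x + 5))"
  define E where "E = 8 * ((2 * x + 9) * (2 * x + 7) * (2 * x + 5))"
  define D where "D = (x + 5) * (x + 6)"
  have "x \<ge> 0" "S \<noteq> 0"
    unfolding x_def S_def by simp_all
  then have nonzero: "x + 3 \<noteq> 0" "x + 4 \<noteq> 0" "x + 5 \<noteq> 0" "x + 6 \<noteq> 0"
    "D \<noteq> 0" "E \<noteq> 0"
    "2 * (2 * (x + 5) - 5) * (2 * (x + 5) - 1) * (2 * (x + 5) - 3) \<noteq> 0"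
    unfolding D_def E_def by auto
  have "fact (2 * (m + 5)) = P * fact (2 * m + 4)"
    "fact (m + 5) = ((x + 5) * (x + 4) * (x + 3)) * fact (m + 2)"
    "fact (m + 5 + 1) = ((x + 6) * (x + 5)) * fact (m + 4)"
    unfolding P_def x_def by (simp_all add: numeral_eq_Suc algebra_simps)
  then have "skew_ballot 0 0 (m + 5) (m + 5) = S * (P / Q)"
    unfolding skew_ballot_0_0_square S_def Q_def by (simp add: divide_inverse ac_simps)
  also have "P / Q = E / D"
    unfolding P_def Q_def E_def D_def using nonzero
    by (simp add: frac_eq_eq) (simp add: algebra_simps)
  finally have ballot: "skew_ballot 0 0 (m + 5) (m + 5) = S * (E / D)" .
  have count: "count_22_before_15 (m + 5) (m + 5) = S * (2 * (16 * x + 37))"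
    unfolding count_22_before_15_square S_def x_def by simp
  have "(2 * (S * g) - S * (E / D)) / (S * (E / D)) = (2 * g * D - E) / E" for g
    using \<open>S \<noteq> 0\<close> nonzero by (simp add: field_simps)
  then show ?thesis
    unfolding ballot count using nonzero
    by (simp add: frac_eq_eq) (simp add: E_def D_def algebra_simps power2_eq_square)
qed

lemma sorting_prob_two_rows_closed_form:
  assumes "5 \<le> n"
  shows "sorting_prob [n, n] (1, 5) (2, 2)
           = (45 * real n ^ 2 - 135 * real n + 30)
               / (2 * (2 * real n - 5) * (2 * real n - 1) * (2 * real n - 3))"
proof -
  obtain m where m: "n = m + 5"
    using assms le_Suc_ex by (metis add.commute)
  have "sorting_prob [n, n] (1, 5) (2, 2)
      = (2 * real (card {T \<in> SYT [n, n]. T (2, 2) < T (1, 5)}) - real (card (SYT [n, n])))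
          / real (card (SYT [n, n]))"
    by (rule sorting_prob_eq_card) (use assms in \<open>simp_all add: two_row_diagram_iff\<close>)
  also have "\<dots> = (2 * count_22_before_15 n n - skew_ballot 0 0 n n) / skew_ballot 0 0 n n"
    using card_SYT_22_before_15[of n n] card_SYT_two_rows[of n n] assms by simp
  also have "\<dots> = (45 * real n ^ 2 - 135 * real n + 30)
               / (2 * (2 * real n - 5) * (2 * real n - 1) * (2 * real n - 3))"
    using sorting_ratio_closed_form[of m] m by simp
  finally show ?thesis .
qed

theorem mainTheorem2:
  shows "(\<forall>n::nat. n \<ge> 5 \<longrightarrow>
           sorting_prob [n, n] (1, 5) (2, 2)
             = (45 * real n ^ 2 - 135 * real n + 30)
                 / (2 * (2 * real n - 5) * (2 * real n - 1) * (2 * real n - 3)))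
       \<and> (\<lambda>n::nat. sorting_prob [n, n] (1, 5) (2, 2)
              - (45 / 16 * (1 / real n) + 135 / 32 * (1 / real n ^ 2) + 75 / 16 * (1 / real n ^ 3)))
           \<in> O(\<lambda>n. 1 / real n ^ 4)"
proof (intro conjI allI impI)
  show "sorting_prob [n, n] (1, 5) (2, 2)
          = (45 * real n ^ 2 - 135 * real n + 30)
              / (2 * (2 * real n - 5) * (2 * real n - 1) * (2 * real n - 3))" if "n \<ge> 5" for n
    using that by (rule sorting_prob_two_rows_closed_form)
  let ?correction =
    "\<lambda>n. 45 / 16 * (1 / real n) + 135 / 32 * (1 / real n ^ 2) + 75 / 16 * (1 / real n ^ 3)"
  have eq: "eventually (\<lambda>n. sorting_prob [n, n] (1, 5) (2, 2) - ?correction n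
          = (45 * real n ^ 2 - 135 * real n + 30)
              / (2 * (2 * real n - 5) * (2 * real n - 1) * (2 * real n - 3)) - ?correction n) at_top"
    using eventually_ge_at_top[of 5] by eventually_elim (simp only: sorting_prob_two_rows_closed_form)
  have asymp: "(\<lambda>n::nat. (45 * real n ^ 2 - 135 * real n + 30)
                   / (2 * (2 * real n - 5) * (2 * real n - 1) * (2 * real n - 3)) - ?correction n)
           \<in> O(\<lambda>n. 1 / real n ^ 4)"
    by real_asymp
  show "(\<lambda>n::nat. sorting_prob [n, n] (1, 5) (2, 2) - ?correction n)
                     \<in> O(\<lambda>n. 1 / real n ^ 4)"
    using landau_o.big.in_cong[OF eq] asymp by (simp only:)
qed

end
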